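(* Let $n\ge3$. For every $r\in[3,n]$, the ideal $\tilde{\mathfrak b}_r$ is an atom of $\mathrm{Mon}(R)$.
   Context: Let $K$ be a field, $N\ge2$, $R=K[X_1,\dots,X_N]$, $X=X_1$, $Y=X_2$. $\mathrm{Mon}(R)$ is the monoid of nonzero monomial ideals of $R$ under ideal multiplication, with identity $R$ (its only unit); an atom of $\mathrm{Mon}(R)$ is an $I\ne R$ in $\mathrm{Mon}(R)$ not a product of two elements of $\mathrm{Mon}(R)\setminus\{R\}$. $[x,y]=\{z\in\mathbb Z:x\le z\le y\}$. For $i\in\mathbb N^+$, $\mathfrak b_i=\langle X^i,Y^i\rangle$. Fix an integer $n\ge 3$ and positive integers $a_1,\dots,a_{n+1}$ with (C1) $a_{n+1}=a_1+\dots+a_{n-1}+2a_n$ and (C2) $a_{i+1}>2(a_1+\dots+a_i)$ for all $i\in[1,n-1]$. For $I\subseteq[1,n+1]$ put $a_I=\sum_{i\in I}a_i$ ($a_\emptyset=0$). For $r\in[3,n]$, $\tilde{\mathfrak b}_r$ is the ideal generated by $\mathfrak b_{a_1}\mathfrak b_{a_3}\mathfrak b_{a_4}\cdots\mathfrak b_{a_r}$ together with the monomial $X^{a_{[3,r]}-a_2}Y^{a_3-a_2}$. *)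

theory Defs
  imports Main
begin

text \<open>Combinatorial model of monomial ideals of R = K[X_1,...,X_N].
  A monomial X_1^{e_1}...X_N^{e_N} is encoded by its exponent vector
  e :: nat => nat, with e i = 0 for i outside {1..N}.  A monomial ideal is
  determined by the set of monomials it contains (a monomial ideal is the
  K-span of its monomials, independently of the field K); nonzero monomial
  ideals correspond exactly to nonempty subsets of monomials closed under
  multiplication by monomials (upward closed for the componentwise order).\<close>

definition monoms :: "nat \<Rightarrow> (nat \<Rightarrow> nat) set" where
  "monoms N = {e. \<forall>i. i \<notin> {1..N} \<longrightarrow> e i = 0}"

definition gen :: "nat \<Rightarrow> (nat \<Rightarrow> nat) set \<Rightarrow> (nat \<Rightarrow> nat) set" where
  "gen N G = {m \<in> monoms N. \<exists>g\<in>G. g \<le> m}"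

definition mon_ideal :: "nat \<Rightarrow> (nat \<Rightarrow> nat) set \<Rightarrow> bool" where
  "mon_ideal N I \<longleftrightarrow> I \<subseteq> monoms N \<and> I \<noteq> {} \<and>
     (\<forall>a\<in>I. \<forall>b\<in>monoms N. a \<le> b \<longrightarrow> b \<in> I)"

abbreviation unit_ideal :: "nat \<Rightarrow> (nat \<Rightarrow> nat) set" where
  "unit_ideal N \<equiv> monoms N"

definition imul :: "nat \<Rightarrow> (nat \<Rightarrow> nat) set \<Rightarrow> (nat \<Rightarrow> nat) set \<Rightarrow> (nat \<Rightarrow> nat) set" where
  "imul N I J = gen N {(\<lambda>k. a k + b k) | a b. a \<in> I \<and> b \<in> J}"

definition iprod :: "nat \<Rightarrow> (nat \<Rightarrow> nat) set list \<Rightarrow> (nat \<Rightarrow> nat) set" where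
  "iprod N Is = foldr (imul N) Is (unit_ideal N)"

definition is_atom :: "nat \<Rightarrow> (nat \<Rightarrow> nat) set \<Rightarrow> bool" where
  "is_atom N I \<longleftrightarrow> mon_ideal N I \<and> I \<noteq> unit_ideal N \<and>
     \<not> (\<exists>J L. mon_ideal N J \<and> mon_ideal N L \<and> J \<noteq> unit_ideal N \<and>
             L \<noteq> unit_ideal N \<and> I = imul N J L)"

text \<open>The monomial X^i Y^j, with X = X_1, Y = X_2.\<close>
definition xy :: "nat \<Rightarrow> nat \<Rightarrow> (nat \<Rightarrow> nat)" where
  "xy i j = (\<lambda>k. if k = 1 then i else if k = 2 then j else 0)"

definition bb :: "nat \<Rightarrow> nat \<Rightarrow> (nat \<Rightarrow> nat) set" where
  "bb N i = gen N {xy i 0, xy 0 i}"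

definition bt :: "nat \<Rightarrow> (nat \<Rightarrow> nat) \<Rightarrow> nat \<Rightarrow> (nat \<Rightarrow> nat) set" where
  "bt N a r = gen N (iprod N (bb N (a 1) # map (\<lambda>i. bb N (a i)) [3..<r+1])
       \<union> {xy ((\<Sum>i=3..r. a i) - a 2) (a 3 - a 2)})"

end

theory Submission
  imports Defs
begin

text \<open>
  Put D = a_1 + a_3 + ... + a_r, U = a_[3,r] - a_2 and V = a_3 - a_2, so that X^U Y^V is the
  extra generator of tilde b_r. The product b_{a_1} b_{a_3} ... b_{a_r} is generated by the
  monomials X^s Y^(D-s), s a subset sum of a_1, a_3, ..., a_r; since U + V > D, every monomial of
  tilde b_r has degree at least D. By (C2) the subset sums come in pairs t, t + a_1, and
  different pairs are at least a_3 - a_1 apart.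

  Suppose tilde b_r = J L with J, L proper. Splitting X^D and Y^D between the factors gives
  X^e, Y^e in J and X^(D-e), Y^(D-e) in L for a subset sum 0 < e < D. Splitting X^U Y^V as
  X^j1 Y^j2 * X^l1 Y^l2 and multiplying back with these pure powers, the degree bound forces
  (up to exchanging J and L) l2 = V and l1 + e = U, hence X^(U-e) Y^(V+e) lies in tilde b_r.
  A generator X^s Y^(D-s) dividing it would make D - s and e two subset sums whose distance lies
  between a_1 + a_2 and V < a_3 - a_1, which is impossible.
\<close>

lemma xy_apply [simp]: "xy i j 1 = i" "xy i j (Suc 0) = i" "xy i j 2 = j"
  by (simp_all add: xy_def)

lemma xy_le_iff: "xy i j \<le> e \<longleftrightarrow> i \<le> e 1 \<and> j \<le> e 2"
proof
  assume "xy i j \<le> e"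
  then show "i \<le> e 1 \<and> j \<le> e 2"
    using le_funD[of "xy i j" e 1] le_funD[of "xy i j" e 2] by simp
qed (simp add: le_fun_def xy_def)

lemma xy_in_monoms: "2 \<le> N \<Longrightarrow> xy i j \<in> monoms N"
  by (auto simp: monoms_def xy_def)

lemma mon_ideal_upclosed:
  "mon_ideal N I \<Longrightarrow> m \<in> I \<Longrightarrow> m' \<in> monoms N \<Longrightarrow> m \<le> m' \<Longrightarrow> m' \<in> I"
  unfolding mon_ideal_def by blast

lemma unit_ideal_if_one_mem:
  assumes "mon_ideal N I" "xy 0 0 \<in> I"
  shows "I = unit_ideal N"
proof -
  have "unit_ideal N \<subseteq> I"
    using mon_ideal_upclosed[OF assms] by (auto simp: xy_le_iff)
  then show ?thesis
    using assms(1) by (auto simp: mon_ideal_def)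
qed

lemma mon_ideal_unit: "mon_ideal N (unit_ideal N)"
  unfolding mon_ideal_def monoms_def by auto

lemma mon_ideal_gen:
  assumes "G \<subseteq> monoms N" "G \<noteq> {}"
  shows "mon_ideal N (gen N G)"
  unfolding mon_ideal_def
proof (intro conjI ballI impI)
  show "gen N G \<subseteq> monoms N"
    by (auto simp: gen_def)
  obtain g where "g \<in> G"
    using assms(2) by blast
  then have "g \<in> gen N G"
    using assms(1) by (auto simp: gen_def)
  then show "gen N G \<noteq> {}"
    by blast
next
  fix m m' assume "m \<in> gen N G" "m' \<in> monoms N" "m \<le> m'"
  then obtain g where "g \<in> G" "g \<le> m'"
    unfolding gen_def by (auto dest: order_trans)
  with \<open>m' \<in> monoms N\<close> show "m' \<in> gen N G"
    unfolding gen_def by blast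
qed

lemma gen_mon_ideal:
  assumes "mon_ideal N I"
  shows "gen N I = I"
proof
  show "gen N I \<subseteq> I"
  proof
    fix m assume "m \<in> gen N I"
    then obtain g where "g \<in> I" "m \<in> monoms N" "g \<le> m"
      by (auto simp: gen_def)
    then show "m \<in> I"
      by (rule mon_ideal_upclosed[OF assms])
  qed
  show "I \<subseteq> gen N I"
    using assms by (auto simp: gen_def mon_ideal_def)
qed

lemma gen_Un: "gen N (A \<union> B) = gen N A \<union> gen N B"
  unfolding gen_def by blast

lemma mon_ideal_imul:
  assumes "mon_ideal N I" "mon_ideal N J"
  shows "mon_ideal N (imul N I J)"
proof -
  have "(\<lambda>k. m k + m' k) \<in> monoms N" if "m \<in> I" "m' \<in> J" for m m'
    using that assms by (auto simp: mon_ideal_def monoms_def)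
  then show ?thesis
    unfolding imul_def using assms by (intro mon_ideal_gen) (auto simp: mon_ideal_def)
qed

lemma mon_ideal_iprod: "(\<And>I. I \<in> set Is \<Longrightarrow> mon_ideal N I) \<Longrightarrow> mon_ideal N (iprod N Is)"
  by (induction Is) (auto simp: iprod_def mon_ideal_unit mon_ideal_imul)

lemma xy_mem_mono:
  assumes "2 \<le> N" "mon_ideal N I" "xy x y \<in> I" "x \<le> x'" "y \<le> y'"
  shows "xy x' y' \<in> I"
  using assms by (auto intro: mon_ideal_upclosed xy_in_monoms simp: xy_le_iff)

lemma xy_add_mem_imul:
  assumes "2 \<le> N" "xy x1 y1 \<in> I" "xy x2 y2 \<in> J"
  shows "xy (x1 + x2) (y1 + y2) \<in> imul N I J"
proof -
  have "(\<lambda>k. xy x1 y1 k + xy x2 y2 k) = xy (x1 + x2) (y1 + y2)"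
    by (auto simp: xy_def)
  then show ?thesis
    unfolding imul_def gen_def using assms xy_in_monoms by fastforce
qed

lemma mem_imul_xy_iff:
  assumes N: "2 \<le> N" and I: "mon_ideal N I" and J: "mon_ideal N J"
  shows "xy x y \<in> imul N I J \<longleftrightarrow>
    (\<exists>x1 y1 x2 y2. xy x1 y1 \<in> I \<and> xy x2 y2 \<in> J \<and> x1 + x2 = x \<and> y1 + y2 = y)"
proof
  assume "xy x y \<in> imul N I J"
  then obtain m m' where "m \<in> I" "m' \<in> J" and le: "\<And>k. m k + m' k \<le> xy x y k"
    unfolding imul_def gen_def le_fun_def by blast
  have "m k \<le> xy (m 1) (m 2) k" "m' k \<le> xy (x - m 1) (y - m 2) k" for k
    using le[of k] le[of 1] le[of 2] by (auto simp: xy_def)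
  then have "m \<le> xy (m 1) (m 2)" "m' \<le> xy (x - m 1) (y - m 2)"
    by (simp_all add: le_fun_def)
  then have "xy (m 1) (m 2) \<in> I" "xy (x - m 1) (y - m 2) \<in> J"
    using \<open>m \<in> I\<close> \<open>m' \<in> J\<close> I J by (auto intro: mon_ideal_upclosed xy_in_monoms N)
  moreover have "m 1 \<le> x" "m 2 \<le> y"
    using le[of 1] le[of 2] by auto
  ultimately show "\<exists>x1 y1 x2 y2. xy x1 y1 \<in> I \<and> xy x2 y2 \<in> J \<and> x1 + x2 = x \<and> y1 + y2 = y"
    by force
next
  assume "\<exists>x1 y1 x2 y2. xy x1 y1 \<in> I \<and> xy x2 y2 \<in> J \<and> x1 + x2 = x \<and> y1 + y2 = y"
  then show "xy x y \<in> imul N I J"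
    using xy_add_mem_imul[OF N] by blast
qed

lemma pure_powers_in_factors:
  assumes N: "2 \<le> N"
    and J: "mon_ideal N J" "J \<noteq> unit_ideal N" and L: "mon_ideal N L" "L \<noteq> unit_ideal N"
    and "xy D 0 \<in> imul N J L" "xy 0 D \<in> imul N J L"
    and deg: "\<And>x y. xy x y \<in> imul N J L \<Longrightarrow> D \<le> x + y"
  obtains e1 e2 where "0 < e1" "0 < e2" "e1 + e2 = D"
    "xy e1 0 \<in> J" "xy 0 e1 \<in> J" "xy e2 0 \<in> L" "xy 0 e2 \<in> L"
proof -
  note prod_iff = mem_imul_xy_iff[OF N J(1) L(1)]
  obtain e1 e2 where X: "xy e1 0 \<in> J" "xy e2 0 \<in> L" "e1 + e2 = D"
    using \<open>xy D 0 \<in> imul N J L\<close> by (auto simp: prod_iff)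
  obtain f1 f2 where Y: "xy 0 f1 \<in> J" "xy 0 f2 \<in> L" "f1 + f2 = D"
    using \<open>xy 0 D \<in> imul N J L\<close> by (auto simp: prod_iff)
  have "xy e1 f2 \<in> imul N J L" "xy e2 f1 \<in> imul N J L"
    using xy_add_mem_imul[OF N X(1) Y(2)] xy_add_mem_imul[OF N Y(1) X(2)] by simp_all
  then have "D \<le> e1 + f2" "D \<le> e2 + f1"
    by (auto dest: deg)
  with X(3) Y(3) have "f1 = e1" "f2 = e2"
    by linarith+
  moreover have "0 < e1" "0 < e2"
    using X(1,2) J L unit_ideal_if_one_mem by (auto intro: gr0I)
  ultimately show thesis
    using that X Y by blast
qed

fun subset_sums :: "nat list \<Rightarrow> nat set" where
  "subset_sums [] = {0}"
| "subset_sums (c # cs) = subset_sums cs \<union> (+) c ` subset_sums cs"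

lemma subset_sum_le_sum_list: "s \<in> subset_sums cs \<Longrightarrow> s \<le> sum_list cs"
  by (induction cs arbitrary: s) (force intro: trans_le_add2)+

lemma sum_list_minus_subset_sum: "s \<in> subset_sums cs \<Longrightarrow> sum_list cs - s \<in> subset_sums cs"
proof (induction cs arbitrary: s)
  case (Cons c cs)
  from Cons.prems consider "s \<in> subset_sums cs" | t where "t \<in> subset_sums cs" "s = c + t"
    by auto
  then show ?case
  proof cases
    case 1
    then have "sum_list (c # cs) - s = c + (sum_list cs - s)"
      using subset_sum_le_sum_list by fastforce
    then show ?thesis
      using Cons.IH[OF 1] by simp
  next
    case 2
    then show ?thesis
      using Cons.IH[of t] by simp
  qed
qed simp

lemma zero_mem_subset_sums: "0 \<in> subset_sums cs"
  by (induction cs) auto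

lemma subset_sums_snoc: "subset_sums (cs @ [c]) = subset_sums cs \<union> (+) c ` subset_sums cs"
  by (induction cs) (auto simp: image_Un image_image add.left_commute)

lemma subset_sums_upt_gap:
  fixes f :: "nat \<Rightarrow> nat"
  assumes superincreasing: "\<And>k. i < k \<Longrightarrow> k < j \<Longrightarrow> f i + (\<Sum>l=i..<k. f l) \<le> f k"
    and "s \<in> subset_sums (map f [i..<j])" "t \<in> subset_sums (map f [i..<j])" "s < t"
  shows "s + f i \<le> t"
  using assms
proof (induction j arbitrary: s t)
  case (Suc j)
  show ?case
  proof (cases "i \<le> j")
    case True
    let ?S = "subset_sums (map f [i..<j])"
    have IH: "u + f i \<le> v" if "u \<in> ?S" "v \<in> ?S" "u < v" for u v
      using Suc.IH[OF _ that] Suc.prems(1) by simp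
    have below_fj: "u + f i \<le> f j" if "u \<in> ?S" for u
    proof (cases "i = j")
      case False
      have "u \<le> (\<Sum>l=i..<j. f l)"
        using subset_sum_le_sum_list[OF that] by (simp add: interv_sum_list_conv_sum_set_nat)
      then show ?thesis
        using Suc.prems(1)[of j] True False by simp
    qed (use that in simp)
    have "subset_sums (map f [i..<Suc j]) = ?S \<union> (+) (f j) ` ?S"
      using True by (simp add: subset_sums_snoc)
    then show ?thesis
      using Suc.prems(2-4) IH below_fj by fastforce
  qed (use Suc.prems in simp)
qed simp

lemma mon_ideal_bb: "2 \<le> N \<Longrightarrow> mon_ideal N (bb N c)"
  unfolding bb_def by (rule mon_ideal_gen) (auto simp: xy_in_monoms)

lemma xy_mem_bb_iff: "2 \<le> N \<Longrightarrow> xy x y \<in> bb N c \<longleftrightarrow> c \<le> x \<or> c \<le> y"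
  unfolding bb_def gen_def by (auto simp: xy_in_monoms xy_le_iff)

lemma xy_mem_imul_bb_iff:
  assumes N: "2 \<le> N" and I: "mon_ideal N I"
  shows "xy x y \<in> imul N (bb N c) I \<longleftrightarrow>
    c \<le> x \<and> xy (x - c) y \<in> I \<or> c \<le> y \<and> xy x (y - c) \<in> I"
proof
  assume "xy x y \<in> imul N (bb N c) I"
  then obtain x1 y1 x2 y2 where "c \<le> x1 \<or> c \<le> y1" "xy x2 y2 \<in> I" "x1 + x2 = x" "y1 + y2 = y"
    by (auto simp: mem_imul_xy_iff[OF N mon_ideal_bb[OF N] I] xy_mem_bb_iff[OF N])
  then show "c \<le> x \<and> xy (x - c) y \<in> I \<or> c \<le> y \<and> xy x (y - c) \<in> I"
    using xy_mem_mono[OF N I] by (elim disjE) force+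
next
  have "xy c 0 \<in> bb N c" "xy 0 c \<in> bb N c"
    by (simp_all add: xy_mem_bb_iff[OF N])
  then show "c \<le> x \<and> xy (x - c) y \<in> I \<or> c \<le> y \<and> xy x (y - c) \<in> I \<Longrightarrow>
      xy x y \<in> imul N (bb N c) I"
    using xy_add_mem_imul[OF N] by (metis add.left_neutral le_add_diff_inverse)
qed

definition above_staircase :: "nat list \<Rightarrow> nat \<Rightarrow> nat \<Rightarrow> bool" where
  "above_staircase cs x y \<longleftrightarrow> (\<exists>s\<in>subset_sums cs. s \<le> x \<and> sum_list cs \<le> s + y)"

lemma above_staircase_Nil [simp]: "above_staircase [] x y"
  by (simp add: above_staircase_def)

lemma above_staircase_Cons_iff:
  "above_staircase (c # cs) x y \<longleftrightarrow>
    c \<le> x \<and> above_staircase cs (x - c) y \<or> c \<le> y \<and> above_staircase cs x (y - c)"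
proof
  assume "above_staircase (c # cs) x y"
  then obtain s where s: "s \<in> subset_sums (c # cs)" "s \<le> x" "c + sum_list cs \<le> s + y"
    by (auto simp: above_staircase_def)
  then consider "s \<in> subset_sums cs" | t where "t \<in> subset_sums cs" "s = c + t"
    by auto
  then show "c \<le> x \<and> above_staircase cs (x - c) y \<or> c \<le> y \<and> above_staircase cs x (y - c)"
  proof cases
    case 1
    then have "c \<le> y" "sum_list cs \<le> s + (y - c)"
      using s subset_sum_le_sum_list[of s cs] by simp_all
    then show ?thesis
      using 1 s(2) unfolding above_staircase_def by blast
  next
    case 2
    then have "c \<le> x" "t \<le> x - c" "sum_list cs \<le> t + y"
      using s by simp_all
    then show ?thesis
      using 2(1) unfolding above_staircase_def by blast
  qed
next
  assume "c \<le> x \<and> above_staircase cs (x - c) y \<or> c \<le> y \<and> above_staircase cs x (y - c)"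
  then obtain t where "t \<in> subset_sums cs"
    and "c + t \<le> x \<and> c + sum_list cs \<le> (c + t) + y \<or> t \<le> x \<and> c + sum_list cs \<le> t + y"
    unfolding above_staircase_def by fastforce
  then show "above_staircase (c # cs) x y"
    unfolding above_staircase_def by auto
qed

lemma xy_mem_iprod_bb_iff:
  assumes N: "2 \<le> N"
  shows "xy x y \<in> iprod N (map (bb N) cs) \<longleftrightarrow> above_staircase cs x y"
proof (induction cs arbitrary: x y)
  case Nil
  then show ?case
    using xy_in_monoms[OF N] by (simp add: iprod_def)
next
  case (Cons c cs)
  have "mon_ideal N (iprod N (map (bb N) cs))"
    by (rule mon_ideal_iprod) (auto simp: mon_ideal_bb[OF N])
  moreover have "iprod N (map (bb N) (c # cs)) = imul N (bb N c) (iprod N (map (bb N) cs))"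
    by (simp add: iprod_def)
  ultimately show ?case
    by (simp add: xy_mem_imul_bb_iff[OF N] Cons.IH above_staircase_Cons_iff)
qed

locale tilde_b =
  fixes N r :: nat and a :: "nat \<Rightarrow> nat"
  assumes two_le_N: "2 \<le> N" and three_le_r: "3 \<le> r" and a1_pos: "0 < a 1"
    and superincreasing: "\<And>i. 1 \<le> i \<Longrightarrow> i < r \<Longrightarrow> 2 * (\<Sum>j=1..i. a j) < a (i + 1)"
begin

definition degs :: "nat list" where
  "degs = a 1 # map a [3..<r+1]"

definition D :: nat where
  "D = sum_list degs"

definition U :: nat where
  "U = (\<Sum>i=3..r. a i) - a 2"

definition V :: nat where
  "V = a 3 - a 2"

lemma double_a1_lt_a2: "2 * a 1 < a 2"
  using superincreasing[of 1] three_le_r by (simp add: eval_nat_numeral)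

lemma double_a1_a2_lt_a3: "2 * (a 1 + a 2) < a 3"
  using superincreasing[of 2] three_le_r by (simp add: eval_nat_numeral)

lemma D_eq: "D = U + a 1 + a 2"
proof -
  have "a 3 \<le> (\<Sum>i=3..r. a i)"
    using three_le_r by (intro member_le_sum) auto
  moreover have "set [3..<r+1] = {3..r}"
    by auto
  then have "sum_list degs = a 1 + (\<Sum>i=3..r. a i)"
    by (simp only: degs_def sum_list.Cons interv_sum_list_conv_sum_set_nat)
  ultimately show ?thesis
    using double_a1_a2_lt_a3 by (simp add: D_def U_def)
qed

lemma V_eq: "V + a 2 = a 3"
  using double_a1_a2_lt_a3 by (simp add: V_def)

lemma D_lt_U_plus_V: "D < U + V"
  using D_eq V_eq double_a1_a2_lt_a3 by simp

lemma complement_mem_subset_sums_degs: "s \<in> subset_sums degs \<Longrightarrow> D - s \<in> subset_sums degs"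
  unfolding D_def by (rule sum_list_minus_subset_sum)

lemma subset_sums_degs_near_or_far:
  assumes "s \<in> subset_sums degs" "t \<in> subset_sums degs" "s \<le> t"
  shows "t \<le> s + a 1 \<or> s + a 3 \<le> t + a 1"
proof -
  let ?S = "subset_sums (map a [3..<r+1])"
  have gap: "u + a 3 \<le> v" if "u \<in> ?S" "v \<in> ?S" "u < v" for u v
  proof (rule subset_sums_upt_gap[OF _ that])
    fix k assume k: "3 < k" "k < r + 1"
    have "a 3 \<le> (\<Sum>l=3..<k. a l)"
      using k by (intro member_le_sum) auto
    moreover have "(\<Sum>l=3..<k. a l) \<le> (\<Sum>l=1..k-1. a l)"
      using k by (intro sum_mono2) auto
    moreover have "2 * (\<Sum>l=1..k-1. a l) < a k"
      using superincreasing[of "k - 1"] k by simp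
    ultimately show "a 3 + (\<Sum>l=3..<k. a l) \<le> a k"
      by linarith
  qed
  obtain s0 t0 where s0: "s0 \<in> ?S" "s0 \<le> s" "s \<le> s0 + a 1"
    and t0: "t0 \<in> ?S" "t0 \<le> t" "t \<le> t0 + a 1"
    using assms(1,2) by (auto simp: degs_def)
  consider "s0 = t0" | "s0 < t0" | "t0 < s0"
    by linarith
  then show ?thesis
  proof cases
    case 1
    then show ?thesis
      using s0 t0 by linarith
  next
    case 2
    then show ?thesis
      using gap[OF s0(1) t0(1)] s0 t0 by linarith
  next
    case 3
    then show ?thesis
      using gap[OF t0(1) s0(1)] s0 t0 assms(3) double_a1_lt_a2 double_a1_a2_lt_a3 by linarith
  qed
qed

lemma bt_eq: "bt N a r = gen N (iprod N (map (bb N) degs) \<union> {xy U V})"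
  by (simp add: bt_def degs_def U_def V_def comp_def)

lemma mon_ideal_iprod_degs: "mon_ideal N (iprod N (map (bb N) degs))"
  by (rule mon_ideal_iprod) (auto simp: mon_ideal_bb[OF two_le_N])

lemma mon_ideal_bt: "mon_ideal N (bt N a r)"
  unfolding bt_eq using mon_ideal_iprod_degs xy_in_monoms[OF two_le_N]
  by (intro mon_ideal_gen) (auto simp: mon_ideal_def)

lemma xy_mem_bt_iff:
  "xy x y \<in> bt N a r \<longleftrightarrow>
    (\<exists>s\<in>subset_sums degs. s \<le> x \<and> D \<le> s + y) \<or> U \<le> x \<and> V \<le> y"
  unfolding bt_eq gen_Un gen_mon_ideal[OF mon_ideal_iprod_degs]
  by (auto simp: xy_mem_iprod_bb_iff[OF two_le_N] above_staircase_def D_def gen_def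
      xy_in_monoms[OF two_le_N] xy_le_iff)

lemma bt_degree_ge: "xy x y \<in> bt N a r \<Longrightarrow> D \<le> x + y"
  using D_lt_U_plus_V by (auto simp: xy_mem_bt_iff)

lemma subset_sum_if_bt_degree_eq:
  "xy x y \<in> bt N a r \<Longrightarrow> x + y = D \<Longrightarrow> x \<in> subset_sums degs"
  using D_lt_U_plus_V by (auto simp: xy_mem_bt_iff) (metis add_le_cancel_right le_antisym)

lemma xy_mem_bt_below_V:
  assumes "xy x y \<in> bt N a r" "y \<le> V"
  shows "D \<le> x + a 1 \<or> y = V \<and> U \<le> x"
  using assms(1) unfolding xy_mem_bt_iff
proof (elim disjE bexE conjE)
  fix s assume s: "s \<in> subset_sums degs" "s \<le> x" "D \<le> s + y"
  have "D - s \<in> subset_sums degs"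
    using complement_mem_subset_sums_degs[OF s(1)] .
  then have "D - s \<le> a 1 \<or> a 3 \<le> D - s + a 1"
    using subset_sums_degs_near_or_far[OF zero_mem_subset_sums] by simp
  then have "D \<le> s + a 1"
    using s(3) assms(2) V_eq double_a1_lt_a2 by (elim disjE) linarith+
  then show ?thesis
    using s(2) by simp
qed (use assms(2) in simp)

lemma xy_notin_bt_shifted_corner:
  assumes e: "e \<in> subset_sums degs" "0 < e" and "l + e \<le> U"
  shows "xy l (e + V) \<notin> bt N a r"
  unfolding xy_mem_bt_iff
proof (safe)
  fix s assume s: "s \<in> subset_sums degs" "s \<le> l" "D \<le> s + (e + V)"
  have "e + a 1 + a 2 \<le> D - s"
    using s \<open>l + e \<le> U\<close> D_eq by linarith
  moreover have "D - s \<le> e + a 1 \<or> e + a 3 \<le> D - s + a 1"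
    using subset_sums_degs_near_or_far[OF e(1) complement_mem_subset_sums_degs[OF s(1)]]
      calculation by simp
  ultimately show False
    using s(3) V_eq double_a1_lt_a2 by (elim disjE) linarith+
qed (use assms in linarith)

lemma split_corner_cases:
  assumes jl: "xy (j1 + e2) j2 \<in> bt N a r" "xy (e1 + l1) l2 \<in> bt N a r"
    and sums: "j1 + l1 = U" "j2 + l2 = V" "e1 + e2 = D"
  shows "l2 = V \<and> e1 + l1 = U \<or> j2 = V \<and> j1 + e2 = U"
proof -
  have low: "D \<le> j1 + e2 + a 1 \<or> j2 = V \<and> U \<le> j1 + e2"
    "D \<le> e1 + l1 + a 1 \<or> l2 = V \<and> U \<le> e1 + l1"
    using xy_mem_bt_below_V[OF jl(1)] xy_mem_bt_below_V[OF jl(2)] sums(2) by simp_all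
  have deg: "D \<le> j1 + e2 + j2" "D \<le> e1 + l1 + l2"
    using bt_degree_ge[OF jl(1)] bt_degree_ge[OF jl(2)] by simp_all
  show ?thesis
  proof (cases "l2 = V")
    case True
    then have "e1 + l1 = U"
      using low(2) deg(1) sums D_eq double_a1_lt_a2 by (elim disjE) linarith+
    with True show ?thesis
      by blast
  next
    case False
    then have "D \<le> e1 + l1 + a 1"
      using low(2) by blast
    then have "j2 = V" "j1 + e2 = U"
      using low(1) deg(2) sums D_eq double_a1_lt_a2 by (elim disjE; linarith)+
    then show ?thesis
      by blast
  qed
qed

lemma bt_not_product:
  assumes J: "mon_ideal N J" "J \<noteq> unit_ideal N" and L: "mon_ideal N L" "L \<noteq> unit_ideal N"
  shows "bt N a r \<noteq> imul N J L"
proof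
  assume bt: "bt N a r = imul N J L"
  note prod_iff = mem_imul_xy_iff[OF two_le_N J(1) L(1), folded bt]
  note prod_mem = xy_add_mem_imul[OF two_le_N, where I = J and J = L, folded bt]
  have "xy D 0 \<in> bt N a r" "xy 0 D \<in> bt N a r"
    using zero_mem_subset_sums complement_mem_subset_sums_degs[OF zero_mem_subset_sums]
    by (auto simp: xy_mem_bt_iff)
  then obtain e1 e2 where e: "0 < e1" "0 < e2" "e1 + e2 = D"
    "xy e1 0 \<in> J" "xy 0 e1 \<in> J" "xy e2 0 \<in> L" "xy 0 e2 \<in> L"
    using pure_powers_in_factors[OF two_le_N J L] bt_degree_ge unfolding bt by blast
  have e1: "e1 \<in> subset_sums degs"
    using subset_sum_if_bt_degree_eq prod_mem[OF e(4,7)] e(3) by simp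
  then have e2: "e2 \<in> subset_sums degs"
    using complement_mem_subset_sums_degs e(3) by (metis add_diff_cancel_left')
  have "xy U V \<in> bt N a r"
    by (simp add: xy_mem_bt_iff)
  then obtain j1 j2 l1 l2 where jl: "xy j1 j2 \<in> J" "xy l1 l2 \<in> L" "j1 + l1 = U" "j2 + l2 = V"
    unfolding prod_iff by blast
  have "xy (j1 + e2) j2 \<in> bt N a r" "xy (e1 + l1) l2 \<in> bt N a r"
    using prod_mem[OF jl(1) e(6)] prod_mem[OF e(4) jl(2)] by simp_all
  then have "l2 = V \<and> e1 + l1 = U \<or> j2 = V \<and> j1 + e2 = U"
    using jl(3,4) e(3) by (rule split_corner_cases)
  then show False
  proof (elim disjE conjE)
    assume "l2 = V" "e1 + l1 = U"
    then have "xy l1 (e1 + V) \<in> bt N a r"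
      using prod_mem[OF e(5) jl(2)] by simp
    then show False
      using xy_notin_bt_shifted_corner[OF e1 e(1)] \<open>e1 + l1 = U\<close> by simp
  next
    assume "j2 = V" "j1 + e2 = U"
    then have "xy j1 (e2 + V) \<in> bt N a r"
      using prod_mem[OF jl(1) e(7)] by (simp add: add.commute)
    then show False
      using xy_notin_bt_shifted_corner[OF e2 e(2)] \<open>j1 + e2 = U\<close> by simp
  qed
qed

lemma is_atom_bt: "is_atom N (bt N a r)"
proof -
  have "xy 0 0 \<notin> bt N a r"
    using bt_degree_ge D_eq a1_pos by fastforce
  then have "bt N a r \<noteq> unit_ideal N"
    using xy_in_monoms[OF two_le_N] by blast
  then show ?thesis
    unfolding is_atom_def using mon_ideal_bt bt_not_product by blast
qed

end

theorem theorem4p7: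
  fixes N n r :: nat and a :: "nat \<Rightarrow> nat"
  assumes "N \<ge> 2" and "n \<ge> 3"
    and "\<forall>i\<in>{1..n+1}. a i > 0"
    and "a (n+1) = (\<Sum>i=1..n-1. a i) + 2 * a n"
    and "\<forall>i\<in>{1..n-1}. a (i+1) > 2 * (\<Sum>j=1..i. a j)"
    and "r \<in> {3..n}"
  shows "is_atom N (bt N a r)"
proof -
  interpret tilde_b N r a
  proof
    show "0 < a 1"
      using assms(2,3) by simp
    show "2 * (\<Sum>j=1..i. a j) < a (i + 1)" if "1 \<le> i" "i < r" for i
    proof -
      have "i \<in> {1..n-1}"
        using assms(6) that by auto
      then show ?thesis
        using assms(5) by simp
    qed
  qed (use assms in auto)
  show ?thesis
    by (rule is_atom_bt)
qed

end
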